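(* For all real $s\ge 3$, $\log\zeta(s)\le 2^{1-s}$, where $\zeta$ is the Riemann zeta-function and $\log$ the natural logarithm. *)

theory Defs
  imports Complex_Main
begin

definition zeta :: "real \<Rightarrow> real" where
  "zeta s = (\<Sum>n. 1 / (real (Suc n)) powr s)"

end

theory Submission
  imports Defs "HOL-Real_Asymp.Real_Asymp"
begin

text \<open>Since \<open>ln x \<le> x - 1\<close>, it suffices to bound \<open>zeta s - 1\<close>. The term \<open>n = 2\<close> contributes
  \<open>2 powr -s\<close>; for \<open>n \<ge> 3\<close>, \<open>n powr -s = 2 powr -s * (2/n) powr s \<le> 2 powr -s * 8/n\<^sup>3\<close>, and
  \<open>8/n\<^sup>3 \<le> 8/((n-1) n (n+1))\<close>, whose series telescopes to \<open>2/3\<close>. Hence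
  \<open>zeta s - 1 \<le> (1 + 2/3) * 2 powr -s \<le> 2 powr (1 - s)\<close>.\<close>

lemma inverse_powr_le_scaled_cube:
  fixes s x :: real
  assumes "s \<ge> 3" and "x \<ge> 2"
  shows "1 / x powr s \<le> 2 powr (-s) * (8 / x ^ 3)"
proof -
  have "1 / x powr s = 2 powr (-s) * (2 / x) powr s"
    using assms by (simp add: powr_divide powr_minus divide_simps)
  also have "(2 / x) powr s \<le> (2 / x) powr 3"
    using assms by (intro powr_mono') auto
  also have "(2 / x) powr (3::real) = 8 / x ^ 3"
    using assms by (simp add: powr_divide powr_numeral)
  finally show ?thesis by simp
qed

lemma cube_inverse_le_telescoping:
  fixes x :: real
  assumes "x > 1"
  shows "1 / x ^ 3 \<le> (1 / ((x - 1) * x) - 1 / (x * (x + 1))) / 2"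
proof -
  have "1 / ((x - 1) * x) - 1 / (x * (x + 1)) = 2 / ((x - 1) * x * (x + 1))"
  proof -
    have "x - 1 \<noteq> 0" "x \<noteq> 0" "x + 1 \<noteq> 0" using assms by auto
    then show ?thesis by (simp add: divide_simps)
  qed
  moreover have "(x - 1) * x * (x + 1) \<le> x ^ 3"
    using assms by (simp add: algebra_simps power3_eq_cube)
  moreover have "(x - 1) * x * (x + 1) > 0"
    using assms by simp
  ultimately show ?thesis
    by (simp add: frac_le)
qed

lemma reciprocal_products_telescope_sums:
  "(\<lambda>n. 1 / ((real n + 2) * (real n + 3)) - 1 / ((real n + 3) * (real n + 4))) sums (1 / 6)"
proof -
  define a where "a n = 1 / ((real n + 2) * (real n + 3))" for n
  have "a \<longlonglongrightarrow> 0"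
    unfolding a_def by real_asymp
  then have "(\<lambda>n. a n - a (Suc n)) sums (a 0 - 0)"
    by (rule telescope_sums')
  then show ?thesis
    by (simp add: a_def algebra_simps)
qed

lemma zeta_tail_bound:
  fixes s :: real
  assumes "s \<ge> 3"
  shows "summable (\<lambda>n. 1 / real (n + 3) powr s)"
    and "(\<Sum>n. 1 / real (n + 3) powr s) \<le> 2 powr (-s) * (2 / 3)"
proof -
  define g where "g n = 2 powr (-s) * 4 * (1 / ((real n + 2) * (real n + 3))
                                         - 1 / ((real n + 3) * (real n + 4)))" for n
  have "g sums (2 powr (-s) * 4 * (1 / 6))"
    unfolding g_def by (rule sums_mult[OF reciprocal_products_telescope_sums])
  then have g_sums: "g sums (2 powr (-s) * (2 / 3))"
    by (simp add: mult.commute)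
  have term_le: "1 / real (n + 3) powr s \<le> g n" for n
  proof -
    have "1 / real (n + 3) powr s \<le> 2 powr (-s) * (8 / real (n + 3) ^ 3)"
      using assms by (intro inverse_powr_le_scaled_cube) auto
    also have "8 / real (n + 3) ^ 3
        \<le> 4 * (1 / ((real n + 2) * (real n + 3)) - 1 / ((real n + 3) * (real n + 4)))"
      using cube_inverse_le_telescoping[of "real n + 3"] by (simp add: algebra_simps)
    finally show ?thesis
      by (simp add: g_def mult.assoc mult_left_mono)
  qed
  show summable: "summable (\<lambda>n. 1 / real (n + 3) powr s)"
    using term_le by (intro summable_comparison_test[OF _ sums_summable[OF g_sums]]) auto
  show "(\<Sum>n. 1 / real (n + 3) powr s) \<le> 2 powr (-s) * (2 / 3)"
    using suminf_le[OF term_le summable sums_summable[OF g_sums]] sums_unique[OF g_sums]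
    by simp
qed

lemma zeta_split_first_two:
  assumes "summable (\<lambda>n. 1 / real (n + 3) powr s)"
  shows "zeta s = 1 + 2 powr (-s) + (\<Sum>n. 1 / real (n + 3) powr s)"
proof -
  define f where "f n = 1 / real (Suc n) powr s" for n
  have "summable (\<lambda>n. f (n + 2))"
    using assms by (simp add: f_def add.commute add_Suc_right numeral_2_eq_2)
  then have "summable f"
    using summable_iff_shift[of f 2] by simp
  then have "suminf f = (\<Sum>n. f (n + 2)) + (\<Sum>i<2. f i)"
    by (rule suminf_split_initial_segment)
  moreover have "zeta s = suminf f"
    by (simp add: zeta_def f_def[abs_def])
  ultimately show ?thesis
    by (simp add: f_def numeral_2_eq_2 powr_minus divide_inverse add_ac)
qed

theorem lemma2p3:
  fixes s :: real
  assumes "s \<ge> 3"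
  shows "ln (zeta s) \<le> 2 powr (1 - s)"
proof -
  define tail where "tail = (\<Sum>n. 1 / real (n + 3) powr s)"
  have zeta_eq: "zeta s = 1 + 2 powr (-s) + tail"
    using zeta_split_first_two zeta_tail_bound(1)[OF assms] by (simp add: tail_def)
  have tail_le: "tail \<le> 2 powr (-s) * (2 / 3)"
    using zeta_tail_bound(2)[OF assms] by (simp add: tail_def)
  have "tail \<ge> 0"
    unfolding tail_def using zeta_tail_bound(1)[OF assms] by (intro suminf_nonneg) auto
  then have "zeta s > 0"
    using zeta_eq powr_gt_zero[of 2 "-s"] by linarith
  then have "ln (zeta s) \<le> zeta s - 1"
    by (rule ln_le_minus_one)
  also have "\<dots> \<le> 2 powr (-s) * 2"
    using zeta_eq tail_le powr_gt_zero[of 2 "-s"] by linarith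
  also have "\<dots> = 2 powr (1 - s)"
    by (simp add: powr_diff powr_minus divide_simps)
  finally show ?thesis .
qed

end
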